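(* Let $\sigma$ be any argumentation semantics whose extensions are maximal conflict-free sets (w.r.t. set inclusion), and let $AF=(AR,Attacks)$, $AF'=(AR',Attacks')$ be argumentation frameworks with $AF\preceq_N AF'$. Let $UE'_{new}=\bigcup_{E'\in\sigma(AF')}(E'\setminus AR)$. Then for every $E\in\sigma(AF)$: if the implication $$\{(a,b)\in Attacks' : a\in UE'_{new},\ b\in E\}=\emptyset\ \Longrightarrow\ \exists E'\in\sigma(AF') \text{ with } E\subseteq E'$$ holds, then there exists $E'\in\sigma(AF')$ with $E'\not\subseteq AR$ or $E'=E$.
   Context: An argumentation framework is a pair $(AR,Attacks)$ with $AR$ a finite set and $Attacks\subseteq AR\times AR$; $a$ attacks $b$ iff $(a,b)\in Attacks$. A set $S$ is conflict-free iff no element of $S$ attacks an element of $S$. An argumentation semantics $\sigma$ assigns to each argumentation framework a set $\sigma(AF)$ of subsets of $AR$; "$\sigma$'s extensions are maximal conflict-free sets" means that for every $AF$, every $E\in\sigma(AF)$ is a $\subseteq$-maximal conflict-free subset of the argument set of $AF$. $AF\preceq_N AF'$ (normal expansion) iff $AR\subseteq AR'$, $Attacks\subseteq Attacks'$ and no $(a,b)\in Attacks'\setminus Attacks$ has both $a,b\in AR$. *)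

theory Defs
  imports Main
begin

definition is_AF :: "'a set \<Rightarrow> ('a \<times> 'a) set \<Rightarrow> bool" where
  "is_AF AR Att \<longleftrightarrow> finite AR \<and> Att \<subseteq> AR \<times> AR"

definition conflict_free :: "('a \<times> 'a) set \<Rightarrow> 'a set \<Rightarrow> bool" where
  "conflict_free Att S \<longleftrightarrow> (\<forall>a\<in>S. \<forall>b\<in>S. (a, b) \<notin> Att)"

definition maximal_conflict_free :: "'a set \<Rightarrow> ('a \<times> 'a) set \<Rightarrow> 'a set \<Rightarrow> bool" where
  "maximal_conflict_free AR Att S \<longleftrightarrow>
     S \<subseteq> AR \<and> conflict_free Att S \<and>
     (\<forall>T. T \<subseteq> AR \<and> conflict_free Att T \<and> S \<subseteq> T \<longrightarrow> T = S)"

type_synonym 'a semantics = "'a set \<Rightarrow> ('a \<times> 'a) set \<Rightarrow> 'a set set"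

definition extensions_maximal_cf :: "'a semantics \<Rightarrow> bool" where
  "extensions_maximal_cf \<sigma> \<longleftrightarrow>
     (\<forall>AR Att. is_AF AR Att \<longrightarrow> (\<forall>E\<in>\<sigma> AR Att. maximal_conflict_free AR Att E))"

definition normal_expansion ::
  "'a set \<Rightarrow> ('a \<times> 'a) set \<Rightarrow> 'a set \<Rightarrow> ('a \<times> 'a) set \<Rightarrow> bool" where
  "normal_expansion AR Att AR' Att' \<longleftrightarrow>
     AR \<subseteq> AR' \<and> Att \<subseteq> Att' \<and>
     (\<forall>(a, b)\<in>Att' - Att. \<not> (a \<in> AR \<and> b \<in> AR))"

end

theory Submission
  imports Defs
begin

text \<open>If some extension of the expanded framework contains a new argument we are done.
  Otherwise no new argument lies in any extension, so the hypothesis yields an extension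
  \<open>E' \<supseteq> E\<close> inside the old arguments. As the expansion only adds attacks, \<open>E'\<close> is
  conflict-free in the old framework, and maximality of \<open>E\<close> forces \<open>E' = E\<close>.\<close>

lemma conflict_free_subset_attacks:
  "conflict_free Att' S \<Longrightarrow> Att \<subseteq> Att' \<Longrightarrow> conflict_free Att S"
  unfolding conflict_free_def by auto

lemma maximal_conflict_free_eqI:
  assumes "maximal_conflict_free AR Att E"
    and "E \<subseteq> T" and "T \<subseteq> AR" and "conflict_free Att T"
  shows "T = E"
  using assms unfolding maximal_conflict_free_def by simp

lemma maximal_conflict_free_extension_eq:
  assumes "maximal_conflict_free AR Att E"
    and "maximal_conflict_free AR' Att' E'"
    and "Att \<subseteq> Att'" and "E \<subseteq> E'" and "E' \<subseteq> AR"
  shows "E' = E"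
proof (rule maximal_conflict_free_eqI)
  show "conflict_free Att E'"
    using assms(2) unfolding maximal_conflict_free_def
    using conflict_free_subset_attacks assms(3) by auto
qed (use assms in auto)

theorem proposition31:
  fixes \<sigma> :: "'a semantics"
    and AR AR' :: "'a set" and Att Att' :: "('a \<times> 'a) set"
  assumes "extensions_maximal_cf \<sigma>"
    and "is_AF AR Att" and "is_AF AR' Att'"
    and "normal_expansion AR Att AR' Att'"
    and "E \<in> \<sigma> AR Att"
    and "{(a, b) \<in> Att'. a \<in> (\<Union>E'\<in>\<sigma> AR' Att'. E' - AR) \<and> b \<in> E} = {}
           \<longrightarrow> (\<exists>E'\<in>\<sigma> AR' Att'. E \<subseteq> E')"
  shows "\<exists>E'\<in>\<sigma> AR' Att'. \<not> E' \<subseteq> AR \<or> E' = E"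
proof (cases "\<forall>E'\<in>\<sigma> AR' Att'. E' \<subseteq> AR")
  case True
  then have "(\<Union>E'\<in>\<sigma> AR' Att'. E' - AR) = {}"
    by auto
  with assms(6) obtain E' where E': "E' \<in> \<sigma> AR' Att'" "E \<subseteq> E'"
    by auto
  have "maximal_conflict_free AR Att E"
    using assms(1,2,5) unfolding extensions_maximal_cf_def by simp
  moreover have "maximal_conflict_free AR' Att' E'"
    using assms(1,3) E'(1) unfolding extensions_maximal_cf_def by simp
  moreover have "Att \<subseteq> Att'"
    using assms(4) unfolding normal_expansion_def by simp
  moreover note \<open>E \<subseteq> E'\<close>
  moreover have "E' \<subseteq> AR"
    using True E'(1) by simp
  ultimately have "E' = E"
    by (rule maximal_conflict_free_extension_eq)
  with E'(1) show ?thesis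
    by auto
next
  case False
  then show ?thesis
    by auto
qed

end
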